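(* Let $\mathcal{J}=\langle U,g,f\rangle$ satisfy the standing assumptions below. For every evaluation $\mu\in\Delta(\mathbb{R}_+)$, every $t\geq0$ and every $y_0\in\mathbb{R}^d$, $$V_\mu(y_0)\leq V_{\mathcal{T}_t\sharp\mu}(y_0)+2\,TV_t(\mu).$$
   Context: Setting: $U$ is a metric space, $g:\mathbb{R}^d\times U\to[0,1]$ is Borel measurable, $f:\mathbb{R}^d\times U\to\mathbb{R}^d$ is Borel measurable with $\|f(y,u)-f(\bar y,u)\|\leq L\|y-\bar y\|$ and $\|f(y,u)\|\leq a(1+\|y\|)$ for constants $L\ge0,a>0$. $\mathcal{U}$ is the set of measurable controls $u:[0,+\infty)\to U$; $y(t,u,y_0)$ is the solution of $y'=f(y,u)$, $y(0)=y_0$. $V_\mu(y_0)=\inf_{u\in\mathcal{U}}\int_{[0,+\infty)} g(y(s,u,y_0),u(s))\,d\mu(s)$; $V_{\mathcal{T}_t\sharp\mu}(y_0)=\inf_{u\in\mathcal{U}}\int_{[0,+\infty)} g(y(s+t,u,y_0),u(s+t))\,d\mu(s)$. $TV_t(\mu)=\sup_{Q\in\mathcal{B}(\mathbb{R}_+)}|\mu(Q)-\mu(Q+t)|$. *)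

theory Defs
  imports "HOL-Probability.Probability"
begin

text \<open>Admissible controls: Borel measurable maps from time to the control set U
  (only their values on [0,+inf) matter).\<close>
definition controls :: "(real \<Rightarrow> 'u::metric_space) set" where
  "controls = {u. u \<in> borel_measurable borel}"

definition is_trajectory ::
  "('a::euclidean_space \<Rightarrow> 'u \<Rightarrow> 'a) \<Rightarrow> (real \<Rightarrow> 'u) \<Rightarrow> 'a \<Rightarrow> (real \<Rightarrow> 'a) \<Rightarrow> bool" where
  "is_trajectory f u y0 y \<longleftrightarrow>
     (\<forall>t\<ge>0. ((\<lambda>s. f (y s) (u s)) has_integral (y t - y0)) {0..t})"

text \<open>y(t,u,y0): the (unique on [0,+inf)) solution.\<close>
definition traj ::
  "('a::euclidean_space \<Rightarrow> 'u \<Rightarrow> 'a) \<Rightarrow> (real \<Rightarrow> 'u) \<Rightarrow> 'a \<Rightarrow> real \<Rightarrow> 'a" where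
  "traj f u y0 = (SOME y. is_trajectory f u y0 y)"

definition Vmu ::
  "('a::euclidean_space \<Rightarrow> 'u::metric_space \<Rightarrow> real) \<Rightarrow> ('a \<Rightarrow> 'u \<Rightarrow> 'a) \<Rightarrow> real measure \<Rightarrow> 'a \<Rightarrow> real" where
  "Vmu g f \<mu> y0 = (INF u\<in>controls.
      enn2real (\<integral>\<^sup>+ s. indicator {0..} s * ennreal (g (traj f u y0 s) (u s)) \<partial>\<mu>))"

text \<open>V_{T_t # mu}(y0) = inf over controls of the integral of g(y(s+t),u(s+t)) d mu(s).\<close>
definition Vshift ::
  "('a::euclidean_space \<Rightarrow> 'u::metric_space \<Rightarrow> real) \<Rightarrow> ('a \<Rightarrow> 'u \<Rightarrow> 'a) \<Rightarrow> real measure \<Rightarrow> real \<Rightarrow> 'a \<Rightarrow> real" where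
  "Vshift g f \<mu> t y0 = (INF u\<in>controls.
      enn2real (\<integral>\<^sup>+ s. indicator {0..} s * ennreal (g (traj f u y0 (s + t)) (u (s + t))) \<partial>\<mu>))"

definition TV :: "real \<Rightarrow> real measure \<Rightarrow> real" where
  "TV t \<mu> = (SUP Q\<in>{Q. Q \<in> sets borel \<and> Q \<subseteq> {0..}}.
      \<bar>measure \<mu> Q - measure \<mu> ((\<lambda>x. x + t) ` Q)\<bar>)"

end

theory Submission imports Defs begin

text \<open>A Borel set \<open>B \<subseteq> [0,\<infinity>)\<close> splits at \<open>t\<close>: its part below \<open>t\<close> has measure at most
  \<open>\<mu>[0,\<infinity>) - \<mu>[t,\<infinity>) \<le> TV\<^sub>t(\<mu>)\<close>, and its part above \<open>t\<close> is the translate by \<open>t\<close> of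
  \<open>{s \<ge> 0. s + t \<in> B}\<close>, so \<open>\<mu> B \<le> \<mu> {s \<ge> 0. s + t \<in> B} + 2 TV\<^sub>t(\<mu>)\<close>. For a step function
  with values in \<open>[0,1]\<close>, the defect of the shifted integral is at most the defect on the union of
  the level sets where it is positive, which is again such a set. Costs along a control need not be
  measurable, so the integral is reached through its defining supremum over simple functions. Nothing
  about the dynamics is used: the comparison holds control by control for any cost in \<open>[0,1]\<close>.\<close>

lemma TV_upper:
  assumes "finite_measure \<mu>" "Q \<in> sets borel" "Q \<subseteq> {0..}"
  shows "\<bar>measure \<mu> Q - measure \<mu> ((\<lambda>x. x + t) ` Q)\<bar> \<le> TV t \<mu>"
  unfolding TV_def
proof (rule cSUP_upper2[where x=Q])
  show "bdd_above ((\<lambda>Q. \<bar>measure \<mu> Q - measure \<mu> ((\<lambda>x. x + t) ` Q)\<bar>) ` {Q. Q \<in> sets borel \<and> Q \<subseteq> {0..}})"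
  proof (rule bdd_aboveI2[where M="measure \<mu> (space \<mu>)"])
    fix Q
    have "measure \<mu> A \<le> measure \<mu> (space \<mu>)" for A
      using finite_measure.bounded_measure[OF assms(1)] .
    then show "\<bar>measure \<mu> Q - measure \<mu> ((\<lambda>x. x + t) ` Q)\<bar> \<le> measure \<mu> (space \<mu>)"
      using measure_nonneg[of \<mu> Q] measure_nonneg[of \<mu> "(\<lambda>x. x + t) ` Q"]
      by (smt (verit))
  qed
qed (use assms in auto)

lemma TV_nonneg: "finite_measure \<mu> \<Longrightarrow> 0 \<le> TV t \<mu>"
  using TV_upper[of \<mu> "{}" t] by auto

lemma sets_shift_preimage:
  fixes B :: "real set"
  assumes "B \<in> sets borel"
  shows "{s. 0 \<le> s \<and> s + t \<in> B} \<in> sets borel"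
proof -
  have "{s. 0 \<le> s \<and> s + t \<in> B} = {0..} \<inter> (\<lambda>s. s + t) -` B" by auto
  then show ?thesis
    using assms by (auto intro!: measurable_sets_borel[of "\<lambda>s. s + t"])
qed

lemma measure_le_measure_shift_preimage_add_TV:
  assumes fin: "finite_measure \<mu>" and S: "sets \<mu> = sets borel" and "0 \<le> t"
    and B: "B \<in> sets borel" "B \<subseteq> {0..}"
  shows "measure \<mu> B \<le> measure \<mu> {s. 0 \<le> s \<and> s + t \<in> B} + 2 * TV t \<mu>"
proof -
  interpret finite_measure \<mu> by fact
  define Q where "Q = {s. 0 \<le> s \<and> s + t \<in> B}"
  have Q: "Q \<in> sets borel" "Q \<subseteq> {0..}"
    unfolding Q_def using sets_shift_preimage[OF B(1)] by auto
  have shift_Q: "(\<lambda>x. x + t) ` Q = B \<inter> {t..}"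
    unfolding Q_def using \<open>0 \<le> t\<close> B(2) by (force intro: image_eqI[where x="_ - t"])
  have shift_nonneg: "(\<lambda>x. x + t) ` {0..} = {t::real..}"
    by (force intro: image_eqI[where x="_ - t"])
  have "measure \<mu> B = measure \<mu> (B - {t..}) + measure \<mu> (B \<inter> {t..})"
    using B S by (simp add: finite_measure_Diff')
  also have "measure \<mu> (B - {t..}) \<le> measure \<mu> ({0..} - {t..})"
    using B S by (intro finite_measure_mono) auto
  also have "\<dots> \<le> TV t \<mu>"
    using TV_upper[OF fin, of "{0..}" t] S
    by (simp add: shift_nonneg finite_measure_Diff' abs_le_iff Int_absorb1 \<open>0 \<le> t\<close>)
  also have "measure \<mu> (B \<inter> {t..}) \<le> measure \<mu> Q + TV t \<mu>"
    using TV_upper[OF fin Q, of t] by (simp add: shift_Q abs_le_iff)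
  finally show ?thesis unfolding Q_def by linarith
qed

lemma sum_mult_le_sum_pos:
  fixes w d :: "'a \<Rightarrow> real"
  assumes "finite V" and w: "\<And>v. v \<in> V \<Longrightarrow> 0 \<le> w v \<and> w v \<le> 1"
  shows "(\<Sum>v\<in>V. w v * d v) \<le> (\<Sum>v\<in>{v\<in>V. 0 < d v}. d v)"
proof -
  have "(\<Sum>v\<in>V. w v * d v) \<le> (\<Sum>v\<in>V. if 0 < d v then d v else 0)"
  proof (rule sum_mono)
    fix v assume "v \<in> V"
    then show "w v * d v \<le> (if 0 < d v then d v else 0)"
      using w[of v] by (auto intro: mult_left_le_one_le mult_nonneg_nonpos)
  qed
  also have "\<dots> = (\<Sum>v\<in>{v\<in>V. 0 < d v}. d v)"
    using \<open>finite V\<close> by (simp add: sum.inter_filter)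
  finally show ?thesis .
qed

lemma weighted_measure_le_shift_preimage_add_TV:
  assumes fin: "finite_measure \<mu>" and S: "sets \<mu> = sets borel" and "0 \<le> t"
    and "finite V" and w: "\<And>v. v \<in> V \<Longrightarrow> 0 \<le> w v \<and> w v \<le> 1"
    and A: "\<And>v. v \<in> V \<Longrightarrow> A v \<in> sets borel" "\<And>v. v \<in> V \<Longrightarrow> A v \<subseteq> {0..}"
    and disj: "disjoint_family_on A V"
  shows "(\<Sum>v\<in>V. w v * measure \<mu> (A v))
    \<le> (\<Sum>v\<in>V. w v * measure \<mu> {s. 0 \<le> s \<and> s + t \<in> A v}) + 2 * TV t \<mu>"
proof -
  interpret finite_measure \<mu> by fact
  define P where "P v = {s. 0 \<le> s \<and> s + t \<in> A v}" for v
  define d where "d v = measure \<mu> (A v) - measure \<mu> (P v)" for v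
  define V' where "V' = {v\<in>V. 0 < d v}"
  define B where "B = (\<Union>v\<in>V'. A v)"
  have "finite V'" "V' \<subseteq> V" using \<open>finite V\<close> by (auto simp: V'_def)
  have P: "P v \<in> sets \<mu>" if "v \<in> V" for v
    using sets_shift_preimage[OF A(1)[OF that]] S by (simp add: P_def)
  have disj_P: "disjoint_family_on P V"
    using disj by (auto simp: disjoint_family_on_def P_def)
  have "(\<Sum>v\<in>V. w v * measure \<mu> (A v)) - (\<Sum>v\<in>V. w v * measure \<mu> (P v)) = (\<Sum>v\<in>V. w v * d v)"
    by (simp add: d_def sum_subtractf right_diff_distrib)
  also have "\<dots> \<le> (\<Sum>v\<in>V'. d v)"
    unfolding V'_def by (rule sum_mult_le_sum_pos[OF \<open>finite V\<close> w])
  also have "\<dots> = measure \<mu> B - measure \<mu> (\<Union>v\<in>V'. P v)"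
  proof -
    have "measure \<mu> (\<Union>v\<in>V'. C v) = (\<Sum>v\<in>V'. measure \<mu> (C v))"
      if "\<And>v. v \<in> V \<Longrightarrow> C v \<in> sets \<mu>" "disjoint_family_on C V" for C
      using \<open>finite V'\<close> \<open>V' \<subseteq> V\<close> that
      by (intro measure_finite_Union) (auto intro: disjoint_family_on_mono)
    then show ?thesis
      using A(1) S P disj disj_P by (simp add: B_def d_def sum_subtractf)
  qed
  also have "(\<Union>v\<in>V'. P v) = {s. 0 \<le> s \<and> s + t \<in> B}"
    by (auto simp: P_def B_def)
  also have "measure \<mu> B - measure \<mu> {s. 0 \<le> s \<and> s + t \<in> B} \<le> 2 * TV t \<mu>"
    using measure_le_measure_shift_preimage_add_TV[OF fin S \<open>0 \<le> t\<close>, of B]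
      \<open>finite V'\<close> \<open>V' \<subseteq> V\<close> A unfolding B_def by force
  finally show ?thesis unfolding P_def by simp
qed

lemma (in finite_measure) nn_integral_step_function:
  assumes "finite V" "\<And>v. v \<in> V \<Longrightarrow> v < \<infinity>" "\<And>v. v \<in> V \<Longrightarrow> B v \<in> sets M"
  shows "(\<integral>\<^sup>+x. (\<Sum>v\<in>V. v * indicator (B v) x) \<partial>M) = ennreal (\<Sum>v\<in>V. enn2real v * measure M (B v))"
proof -
  have "(\<integral>\<^sup>+x. (\<Sum>v\<in>V. v * indicator (B v) x) \<partial>M) = (\<Sum>v\<in>V. v * emeasure M (B v))"
    using assms(3) by (simp add: nn_integral_sum nn_integral_cmult_indicator)
  also have "\<dots> = (\<Sum>v\<in>V. ennreal (enn2real v * measure M (B v)))"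
    using assms(2,3) by (intro sum.cong refl) (simp add: emeasure_eq_measure ennreal_mult less_top)
  also have "\<dots> = ennreal (\<Sum>v\<in>V. enn2real v * measure M (B v))"
    by (intro sum_ennreal) auto
  finally show ?thesis .
qed

lemma simple_function_nn_integral_le_shift_add_TV:
  assumes fin: "finite_measure \<mu>" and S: "sets \<mu> = sets borel" and "0 \<le> t"
    and sf: "simple_function \<mu> \<phi>" and le: "\<And>x. \<phi> x \<le> indicator {0..} x"
  shows "(\<integral>\<^sup>+x. \<phi> x \<partial>\<mu>) \<le> (\<integral>\<^sup>+s. indicator {0..} s * \<phi> (s + t) \<partial>\<mu>) + ennreal (2 * TV t \<mu>)"
proof -
  interpret finite_measure \<mu> by fact
  have "space \<mu> = UNIV" using sets_eq_imp_space_eq[OF S] by simp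
  define V where "V = range \<phi> - {0}"
  define A where "A v = \<phi> -` {v}" for v
  define P where "P v = {s. 0 \<le> s \<and> s + t \<in> A v}" for v
  have "finite V" using simple_functionD(1)[OF sf] \<open>space \<mu> = UNIV\<close> by (simp add: V_def)
  have A: "A v \<in> sets borel" for v
    using simple_functionD(2)[OF sf, of "{v}"] \<open>space \<mu> = UNIV\<close> S by (simp add: A_def)
  have P: "P v \<in> sets borel" for v
    using sets_shift_preimage[OF A] by (simp add: P_def)
  have V_le_1: "v \<le> 1" if "v \<in> V" for v
    using that by (auto simp: V_def intro!: order_trans[OF le] simp: indicator_def)
  have A_nonneg: "A v \<subseteq> {0..}" if "v \<in> V" for v
  proof
    fix x assume "x \<in> A v"
    then have "\<phi> x \<noteq> 0" using that by (auto simp: V_def A_def)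
    then show "x \<in> {0..}" using le[of x] by (cases "0 \<le> x") auto
  qed
  have V_less_top: "v < \<infinity>" if "v \<in> V" for v
    using V_le_1[OF that] by (simp add: order_le_less_trans)
  have \<phi>_step: "\<phi> x = (\<Sum>v\<in>V. v * indicator (A v) x)" for x
    using \<open>finite V\<close>
    by (cases "\<phi> x = 0") (simp_all add: A_def V_def indicator_def sum.delta' if_distrib cong: if_cong)
  have shift_step: "indicator {0..} s * \<phi> (s + t) = (\<Sum>v\<in>V. v * indicator (P v) s)" for s
    by (simp add: \<phi>_step sum_distrib_left P_def indicator_def)
  have "(\<Sum>v\<in>V. enn2real v * measure \<mu> (A v))
      \<le> (\<Sum>v\<in>V. enn2real v * measure \<mu> (P v)) + 2 * TV t \<mu>"
    unfolding P_def using V_le_1 A A_nonneg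
    by (intro weighted_measure_le_shift_preimage_add_TV[OF fin S \<open>0 \<le> t\<close> \<open>finite V\<close>])
      (auto simp: enn2real_leI disjoint_family_on_def A_def)
  then have "ennreal (\<Sum>v\<in>V. enn2real v * measure \<mu> (A v))
      \<le> ennreal (\<Sum>v\<in>V. enn2real v * measure \<mu> (P v)) + ennreal (2 * TV t \<mu>)"
    using TV_nonneg[OF fin] by (simp add: ennreal_plus[symmetric] sum_nonneg del: ennreal_plus)
  moreover have "(\<integral>\<^sup>+x. \<phi> x \<partial>\<mu>) = ennreal (\<Sum>v\<in>V. enn2real v * measure \<mu> (A v))"
    using A S V_less_top \<open>finite V\<close> by (simp only: \<phi>_step nn_integral_step_function)
  moreover have "(\<integral>\<^sup>+s. indicator {0..} s * \<phi> (s + t) \<partial>\<mu>)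
      = ennreal (\<Sum>v\<in>V. enn2real v * measure \<mu> (P v))"
    using P S V_less_top \<open>finite V\<close> by (simp only: shift_step nn_integral_step_function)
  ultimately show ?thesis by simp
qed

lemma nn_integral_le_shift_add_TV:
  fixes h :: "real \<Rightarrow> ennreal"
  assumes fin: "finite_measure \<mu>" and S: "sets \<mu> = sets borel" and "0 \<le> t"
    and h_le_1: "\<And>s. h s \<le> 1"
  shows "(\<integral>\<^sup>+s. indicator {0..} s * h s \<partial>\<mu>)
    \<le> (\<integral>\<^sup>+s. indicator {0..} s * h (s + t) \<partial>\<mu>) + ennreal (2 * TV t \<mu>)"
  unfolding nn_integral_def[of \<mu> "\<lambda>s. indicator {0..} s * h s"]
proof (rule SUP_least)
  fix \<phi> assume "\<phi> \<in> {g. simple_function \<mu> g \<and> g \<le> (\<lambda>s. indicator {0..} s * h s)}"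
  then have sf: "simple_function \<mu> \<phi>" and le: "\<And>s. \<phi> s \<le> indicator {0..} s * h s"
    by (auto simp: le_fun_def)
  have "\<phi> s \<le> indicator {0..} s" for s
    using le[of s] h_le_1[of s] by (auto simp: indicator_def)
  then have "integral\<^sup>S \<mu> \<phi> \<le> (\<integral>\<^sup>+s. indicator {0..} s * \<phi> (s + t) \<partial>\<mu>) + ennreal (2 * TV t \<mu>)"
    using simple_function_nn_integral_le_shift_add_TV[OF fin S \<open>0 \<le> t\<close> sf]
    by (simp add: nn_integral_eq_simple_integral[OF sf])
  also have "(\<integral>\<^sup>+s. indicator {0..} s * \<phi> (s + t) \<partial>\<mu>) \<le> (\<integral>\<^sup>+s. indicator {0..} s * h (s + t) \<partial>\<mu>)"
  proof (intro nn_integral_mono mult_left_mono)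
    fix s
    show "\<phi> (s + t) \<le> h (s + t)"
      using le[of "s + t"] by (cases "0 \<le> s + t") auto
  qed simp
  finally show "integral\<^sup>S \<mu> \<phi> \<le> (\<integral>\<^sup>+s. indicator {0..} s * h (s + t) \<partial>\<mu>) + ennreal (2 * TV t \<mu>)"
    by (simp add: add_right_mono)
qed

lemma enn2real_nn_integral_le_shift_add_TV:
  fixes h :: "real \<Rightarrow> real"
  assumes fin: "finite_measure \<mu>" and S: "sets \<mu> = sets borel" and "0 \<le> t"
    and h: "\<And>s. h s \<in> {0..1}"
  shows "enn2real (\<integral>\<^sup>+s. indicator {0..} s * ennreal (h s) \<partial>\<mu>)
    \<le> enn2real (\<integral>\<^sup>+s. indicator {0..} s * ennreal (h (s + t)) \<partial>\<mu>) + 2 * TV t \<mu>"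
proof -
  interpret finite_measure \<mu> by fact
  define G where "G = (\<integral>\<^sup>+s. indicator {0..} s * ennreal (h (s + t)) \<partial>\<mu>)"
  have "G \<le> (\<integral>\<^sup>+s. 1 \<partial>\<mu>)"
    unfolding G_def using h by (intro nn_integral_mono) (auto simp: indicator_def)
  also have "\<dots> < top"
    by (metis emeasure_finite less_top nn_integral_const mult_1)
  finally have "G < top" .
  have "(\<integral>\<^sup>+s. indicator {0..} s * ennreal (h s) \<partial>\<mu>) \<le> G + ennreal (2 * TV t \<mu>)"
    unfolding G_def using h by (intro nn_integral_le_shift_add_TV[OF fin S \<open>0 \<le> t\<close>]) auto
  then have "enn2real (\<integral>\<^sup>+s. indicator {0..} s * ennreal (h s) \<partial>\<mu>) \<le> enn2real (G + ennreal (2 * TV t \<mu>))"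
    using \<open>G < top\<close> by (intro enn2real_mono) auto
  also have "\<dots> = enn2real G + 2 * TV t \<mu>"
    using \<open>G < top\<close> TV_nonneg[OF fin] by (simp add: enn2real_plus)
  finally show ?thesis unfolding G_def .
qed

theorem mainTheorem11:
  fixes g :: "'a::euclidean_space \<Rightarrow> 'u::metric_space \<Rightarrow> real"
    and f :: "'a \<Rightarrow> 'u \<Rightarrow> 'a"
    and L a :: real
    and \<mu> :: "real measure"
    and t :: real and y0 :: 'a
  assumes g_meas: "(\<lambda>(y, u). g y u) \<in> borel_measurable borel"
    and g_range: "\<And>y u. g y u \<in> {0..1}"
    and f_meas: "(\<lambda>(y, u). f y u) \<in> borel_measurable borel"
    and L_nonneg: "L \<ge> 0" and a_pos: "a > 0"
    and f_lip: "\<And>y y' u. norm (f y u - f y' u) \<le> L * norm (y - y')"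
    and f_growth: "\<And>y u. norm (f y u) \<le> a * (1 + norm y)"
    and mu_prob: "prob_space \<mu>"
    and mu_sets: "sets \<mu> = sets borel"
    and mu_supp: "measure \<mu> {0..} = 1"
    and t_nonneg: "t \<ge> 0"
  shows "Vmu g f \<mu> y0 \<le> Vshift g f \<mu> t y0 + 2 * TV t \<mu>"
proof -
  have fin: "finite_measure \<mu>"
    using mu_prob by (rule prob_space.axioms(1))
  have "(\<lambda>_. undefined) \<in> (controls :: (real \<Rightarrow> 'u) set)"
    by (simp add: controls_def)
  then have "controls \<noteq> ({} :: (real \<Rightarrow> 'u) set)" by blast
  then have "Vmu g f \<mu> y0 - 2 * TV t \<mu> \<le> Vshift g f \<mu> t y0"
    unfolding Vshift_def
  proof (rule cINF_greatest)
    fix u :: "real \<Rightarrow> 'u" assume "u \<in> controls"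
    then have "Vmu g f \<mu> y0 \<le> enn2real (\<integral>\<^sup>+s. indicator {0..} s * ennreal (g (traj f u y0 s) (u s)) \<partial>\<mu>)"
      unfolding Vmu_def by (rule cINF_lower[rotated]) (auto intro!: bdd_belowI[where m=0])
    also have "\<dots> \<le> enn2real (\<integral>\<^sup>+s. indicator {0..} s * ennreal (g (traj f u y0 (s + t)) (u (s + t))) \<partial>\<mu>)
        + 2 * TV t \<mu>"
      using g_range by (rule enn2real_nn_integral_le_shift_add_TV[OF fin mu_sets t_nonneg])
    finally show "Vmu g f \<mu> y0 - 2 * TV t \<mu>
        \<le> enn2real (\<integral>\<^sup>+s. indicator {0..} s * ennreal (g (traj f u y0 (s + t)) (u (s + t))) \<partial>\<mu>)"
      by simp
  qed
  then show ?thesis by simp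
qed

end
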